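(* Under the hypotheses and notation below, for every $(i,j)\in\mathbb{Z}^2\setminus\mathcal H$, $$D_{i,j}(z;t):=\sum_{n\ge0}\sum_{k\ge0}a^{[-k]}_{i,j}(n)z^kt^n=\sqrt{\Delta(z)}\;S^+_{i,j}(z;t),\qquad\text{where } S^+_{i,j}(x;t)=\sum_{k\ge0}x^kS_{i+k,j}(t).$$
   Context: $\mathcal H=\{(k,0):k\le0\}$; $A\subset\mathbb{Z}^2$ finite, symmetric ($(i,j)\in A\Rightarrow(i,-j)\in A$), with small height variations ($|j|\le1$), $A_1\ne0$, and reversal-symmetric ($(i,j)\in A\Rightarrow(-i,-j)\in A$). $a^{[k]}_{i,j}(n)$ is the number of walks $(w_0,\dots,w_n)$ with steps in $A$, $w_0=(k,0)$, $w_n=(i,j)$, and $w_m\notin\mathcal H$ for $1\le m\le n$. $S_{i,j}(t)=\sum_na^{[0]}_{i,j}(n)t^n$. With $A_0(x)=\sum_{(i,0)\in A}x^i$, $A_1(x)=\sum_{(i,1)\in A}x^i$, $\delta(x)=(1-tA_0(x))^2-4t^2A_1(x)^2$, $\Delta(x)$ is the factor with coefficients in $\mathbb{R}[x]$ of the canonical factorization $\delta=D\Delta(x)\bar\Delta(1/x)$ (unique triple of power series in $t$, $D$ real coefficients, $\bar\Delta$ coefficients in $\mathbb{R}[1/x]$, normalized by $D(0)=\Delta(0;t)=\bar\Delta(0;t)=\Delta(x;0)=\bar\Delta(1/x;0)=1$). The square root has constant term $1$. *)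

theory Defs
  imports "HOL-Computational_Algebra.Computational_Algebra"
begin

definition halfline :: "(int \<times> int) set" where
  "halfline = {(k, 0) | k. k \<le> 0}"

definition wpos :: "int \<Rightarrow> (int \<times> int) list \<Rightarrow> nat \<Rightarrow> int \<times> int" where
  "wpos k ss m = (k + sum_list (map fst (take m ss)), sum_list (map snd (take m ss)))"

text \<open>a^[k]_{i,j}(n): number of walks of length n with steps in A from (k,0) to (i,j)
  whose points w_1,...,w_n avoid H.  A walk is identified with its list of steps.\<close>
definition walk_count :: "(int \<times> int) set \<Rightarrow> int \<Rightarrow> int \<Rightarrow> int \<Rightarrow> nat \<Rightarrow> nat" where
  "walk_count A k i j n = card {ss. length ss = n \<and> set ss \<subseteq> A \<and> wpos k ss n = (i, j)
       \<and> (\<forall>m\<in>{1..n}. wpos k ss m \<notin> halfline)}"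

definition S_gf :: "(int \<times> int) set \<Rightarrow> int \<Rightarrow> int \<Rightarrow> real fps" where
  "S_gf A i j = Abs_fps (\<lambda>n. real (walk_count A 0 i j n))"

text \<open>Bivariate series in t (outer) and x (inner):  F = \<Sum>_n (\<Sum>_k c(n,k) x^k) t^n.\<close>
definition Splus :: "(int \<times> int) set \<Rightarrow> int \<Rightarrow> int \<Rightarrow> real fps fps" where
  "Splus A i j = Abs_fps (\<lambda>n. Abs_fps (\<lambda>k. fps_nth (S_gf A (i + int k) j) n))"

definition D_gf :: "(int \<times> int) set \<Rightarrow> int \<Rightarrow> int \<Rightarrow> real fps fps" where
  "D_gf A i j = Abs_fps (\<lambda>n. Abs_fps (\<lambda>k. real (walk_count A (- int k) i j n)))"

definition A0 :: "(int \<times> int) set \<Rightarrow> real fls" where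
  "A0 A = (\<Sum>i\<in>{i. (i, 0) \<in> A}. fls_X_intpow i)"

definition A1 :: "(int \<times> int) set \<Rightarrow> real fls" where
  "A1 A = (\<Sum>i\<in>{i. (i, 1) \<in> A}. fls_X_intpow i)"

definition delta :: "(int \<times> int) set \<Rightarrow> real fls fps" where
  "delta A = (1 - fps_X * fps_const (A0 A))^2 - 4 * fps_X^2 * fps_const ((A1 A)^2)"

definition fps_map :: "('a \<Rightarrow> 'b) \<Rightarrow> 'a fps \<Rightarrow> 'b fps" where
  "fps_map f F = Abs_fps (\<lambda>n. f (fps_nth F n))"

definition inv_poly_fls :: "real poly \<Rightarrow> real fls" where
  "inv_poly_fls p = (\<Sum>k\<le>degree p. fls_const (coeff p k) * fls_X_intpow (- int k))"

text \<open>Canonical factorization \<delta> = D \<Delta>(x) \<Delta>bar(1/x): D \<in> R[[t]], \<Delta> \<in> R[x][[t]],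
  \<Delta>bar \<in> R[1/x][[t]] (its polynomial coefficients are in the variable 1/x), normalized.\<close>
definition canonical_factorization ::
  "(int \<times> int) set \<Rightarrow> real fps \<Rightarrow> real poly fps \<Rightarrow> real poly fps \<Rightarrow> bool" where
  "canonical_factorization A Dc Dl Db \<longleftrightarrow>
     delta A = fps_map fls_const Dc * fps_map (\<lambda>p. fps_to_fls (fps_of_poly p)) Dl
                 * fps_map inv_poly_fls Db
     \<and> fps_nth Dc 0 = 1
     \<and> (\<forall>n. poly (fps_nth Dl n) 0 = (if n = 0 then 1 else 0))
     \<and> (\<forall>n. poly (fps_nth Db n) 0 = (if n = 0 then 1 else 0))
     \<and> fps_nth Dl 0 = 1 \<and> fps_nth Db 0 = 1"

definition fps_sqrt1 :: "'a::idom fps \<Rightarrow> 'a fps" where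
  "fps_sqrt1 F = (THE G. G * G = F \<and> fps_nth G 0 = 1)"

end

(* Mark the abscissa of a walk by a Laurent variable x and group the walks from the origin
   by their final height j.  Killing the walks that step onto H, these level series satisfy a
   linear recursion in j whose kernel is t A1 rho^2 - (1 - t A0) rho + t A1 = 0; its solution
   rho^|j| / sqrt delta gives S+_{0,0} sqrt delta = 1 - G, where G has only non-positive powers
   of x.  With delta = D Delta(x) Deltabar(1/x), the series (S+_{0,0})^2 Delta has only
   non-negative powers of x, while dividing (1 - G)^2 by D Deltabar shows that it has only
   non-positive ones; so it is the constant 1.  Hence sqrt Delta = Delta S+_{0,0} is the
   inverse of S+_{0,0}, and D_{i,j} and sqrt Delta S+_{i,j} satisfy the same recursion off H
   with the same values x^(-i) on H. *)

theory Submission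
  imports Defs
begin

unbundle fps_syntax

lemma fps_map_nth [simp]: "fps_map f F $ n = f (F $ n)"
  by (simp add: fps_map_def)

lemma fps_map_compose: "fps_map f (fps_map g F) = fps_map (f \<circ> g) F"
  by (rule fps_ext) simp

lemma fps_map_mult:
  assumes "h 0 = 0" "\<And>x y. h (x + y) = h x + h y" "\<And>x y. h (x * y) = h x * h y"
  shows "fps_map h (F * G) = fps_map h F * fps_map h G"
  by (rule fps_ext)
     (simp add: fps_mult_nth assms(3) sum_comp_morphism[of h, OF assms(1,2), symmetric] o_def)

lemma fps_map_one:
  assumes "h 0 = 0" "h 1 = 1"
  shows "fps_map h 1 = 1"
  by (rule fps_ext) (simp add: assms)

lemma fps_map_power:
  assumes "h 0 = 0" "h 1 = 1" "\<And>x y. h (x + y) = h x + h y" "\<And>x y. h (x * y) = h x * h y"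
  shows "fps_map h (F ^ k) = fps_map h F ^ k"
  by (induction k) (simp_all add: fps_map_one fps_map_mult assms)

lemma fps_const_sum: "fps_const (\<Sum>x\<in>S. f x) = (\<Sum>x\<in>S. fps_const (f x))"
  by (induction S rule: infinite_finite_induct) (auto simp flip: fps_const_add)

lemma fps_sqrt1_eqI:
  fixes G :: "'a::{idom,semiring_char_0} fps"
  assumes "G * G = V" "G $ 0 = 1"
  shows "fps_sqrt1 V = G"
  unfolding fps_sqrt1_def
proof (rule the_equality)
  show "G * G = V \<and> G $ 0 = 1" using assms by simp
next
  fix H assume H: "H * H = V \<and> H $ 0 = 1"
  have "(H - G) * (H + G) = 0"
    using H assms(1) by (simp add: algebra_simps)
  moreover have "H + G \<noteq> 0"
  proof
    assume "H + G = 0"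
    then have "(H + G) $ 0 = 0" by simp
    with H assms(2) show False by simp
  qed
  ultimately show "H = G" by simp
qed

lemma fps_causal_fixpoint_unique:
  fixes X Y :: "'i \<Rightarrow> 'a::comm_semiring_1 fps"
  assumes causal: "\<And>F G n p. (\<And>q. F q $ n = G q $ n) \<Longrightarrow> L F p $ n = L G p $ n"
    and X: "\<And>p. X p = C p + fps_X * L X p"
    and Y: "\<And>p. Y p = C p + fps_X * L Y p"
  shows "X = Y"
proof -
  have "X p $ n = Y p $ n" for p n
  proof (induction n arbitrary: p)
    case 0
    show ?case by (subst X, subst Y) simp
  next
    case (Suc n)
    have "L X p $ n = L Y p $ n" by (rule causal) (rule Suc.IH)
    then show ?case by (subst X, subst Y) simp
  qed
  then show ?thesis by (auto simp: fps_eq_iff)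
qed

lemma geometric_kernel_solution:
  fixes K q rho W :: "'a::comm_ring_1"
  assumes root: "q * rho^2 + q = K * rho" and inv: "W * (K - 2 * q * rho) = 1"
  shows "K * (W * rho ^ nat \<bar>j\<bar>) =
           (if j = 0 then 1 else 0) + q * (W * rho ^ nat \<bar>j - 1\<bar> + W * rho ^ nat \<bar>j + 1\<bar>)"
proof (cases "j = 0")
  case True
  then show ?thesis using inv by (simp add: algebra_simps)
next
  case False
  define m where "m = nat \<bar>j\<bar> - 1"
  have j: "nat \<bar>j\<bar> = Suc m" using False unfolding m_def by arith
  have neighbours: "rho ^ nat \<bar>j - 1\<bar> + rho ^ nat \<bar>j + 1\<bar> = rho ^ m + rho ^ Suc (Suc m)"
  proof (cases "j > 0")
    case True
    then have "nat \<bar>j - 1\<bar> = m \<and> nat \<bar>j + 1\<bar> = Suc (Suc m)" unfolding m_def by arith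
    then show ?thesis by simp
  next
    case False
    with \<open>j \<noteq> 0\<close> have "nat \<bar>j - 1\<bar> = Suc (Suc m) \<and> nat \<bar>j + 1\<bar> = m"
      unfolding m_def by arith
    then show ?thesis by simp
  qed
  have "q * (W * rho ^ nat \<bar>j - 1\<bar> + W * rho ^ nat \<bar>j + 1\<bar>)
      = q * W * (rho ^ nat \<bar>j - 1\<bar> + rho ^ nat \<bar>j + 1\<bar>)"
    by (simp add: algebra_simps)
  also have "\<dots> = W * rho ^ m * (q * rho^2 + q)"
    unfolding neighbours by (simp add: algebra_simps power2_eq_square)
  also have "\<dots> = K * (W * rho ^ nat \<bar>j\<bar>)"
    unfolding root j by (simp add: algebra_simps)
  finally show ?thesis using False by simp
qed

lemma sum_fiber_snd: "(\<Sum>a\<in>{a\<in>A. snd a = b}. g a) = (\<Sum>i\<in>{i. (i, b) \<in> A}. g (i, b))"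
  by (rule sum.reindex_bij_witness[where i = "\<lambda>i. (i, b)" and j = fst]) auto

definition fls_nonpos :: "'a::zero fls \<Rightarrow> bool" where
  "fls_nonpos f \<longleftrightarrow> (\<forall>i>0. f $$ i = 0)"

definition fps_fls_nonpos :: "'a::zero fls fps \<Rightarrow> bool" where
  "fps_fls_nonpos F \<longleftrightarrow> (\<forall>n. fls_nonpos (F $ n))"

lemma fls_nonpos_mult:
  fixes f g :: "'a::semiring_1 fls"
  assumes "fls_nonpos f" "fls_nonpos g"
  shows "fls_nonpos (f * g)"
  unfolding fls_nonpos_def
proof (intro allI impI)
  fix n :: int assume "0 < n"
  have "f $$ i * g $$ (n - i) = 0" for i
    using assms \<open>0 < n\<close> unfolding fls_nonpos_def by (cases "i > 0") auto
  then show "(f * g) $$ n = 0" by (simp add: fls_times_nth(2))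
qed

lemma fls_nonpos_sum: "(\<And>x. x \<in> S \<Longrightarrow> fls_nonpos (f x)) \<Longrightarrow> fls_nonpos (\<Sum>x\<in>S. f x)"
  unfolding fls_nonpos_def by (simp add: fls_nth_sum)

lemma fls_nonpos_fps_to_fls: "fls_nonpos (fps_to_fls f) \<longleftrightarrow> f = fps_const (f $ 0)"
proof -
  have "fls_nonpos (fps_to_fls f) \<longleftrightarrow> (\<forall>n>0. f $ n = 0)"
    unfolding fls_nonpos_def
  proof (intro iffI allI impI)
    fix n :: nat assume "\<forall>i>0. fps_to_fls f $$ i = 0" "0 < n"
    then have "fps_to_fls f $$ int n = 0" by (simp del: fps_to_fls_nth)
    then show "f $ n = 0" by simp
  qed simp
  also have "\<dots> \<longleftrightarrow> f = fps_const (f $ 0)"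
    by (auto simp: fps_eq_iff)
  finally show ?thesis .
qed

lemma fps_fls_nonpos_mult:
  fixes F G :: "'a::comm_semiring_1 fls fps"
  shows "fps_fls_nonpos F \<Longrightarrow> fps_fls_nonpos G \<Longrightarrow> fps_fls_nonpos (F * G)"
  unfolding fps_fls_nonpos_def by (auto simp: fps_mult_nth intro!: fls_nonpos_sum fls_nonpos_mult)

lemma fps_fls_nonpos_one: "fps_fls_nonpos (1 :: 'a::zero_neq_one fls fps)"
  unfolding fps_fls_nonpos_def fls_nonpos_def by simp

lemma fps_fls_nonpos_power:
  fixes F :: "'a::comm_semiring_1 fls fps"
  shows "fps_fls_nonpos F \<Longrightarrow> fps_fls_nonpos (F ^ k)"
  by (induction k) (simp_all add: fps_fls_nonpos_one fps_fls_nonpos_mult)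

lemma fps_fls_nonpos_diff:
  fixes F G :: "'a::ab_group_add fls fps"
  shows "fps_fls_nonpos F \<Longrightarrow> fps_fls_nonpos G \<Longrightarrow> fps_fls_nonpos (F - G)"
  unfolding fps_fls_nonpos_def fls_nonpos_def by simp

lemma fps_fls_nonpos_cancel:
  fixes Q E :: "'a::comm_ring_1 fls fps"
  assumes "fps_fls_nonpos (Q * E)" "fps_fls_nonpos E" "E $ 0 = 1"
  shows "fps_fls_nonpos Q"
  unfolding fps_fls_nonpos_def
proof
  fix n show "fls_nonpos (Q $ n)"
  proof (induction n rule: less_induct)
    case (less n)
    have "(Q * E) $ n = (\<Sum>i<n. Q $ i * E $ (n - i)) + Q $ n"
      by (simp add: fps_mult_nth atLeast0AtMost lessThan_Suc_atMost[symmetric] assms(3))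
    moreover have "fls_nonpos (\<Sum>i<n. Q $ i * E $ (n - i))"
      using less assms(2) by (auto intro!: fls_nonpos_sum fls_nonpos_mult simp: fps_fls_nonpos_def)
    moreover have "fls_nonpos ((Q * E) $ n)"
      using assms(1) by (simp add: fps_fls_nonpos_def)
    ultimately show ?case
      by (simp add: fls_nonpos_def)
  qed
qed

lemma fps_to_fls_series_const:
  fixes P :: "'a::comm_ring_1 fps fps"
  assumes "fps_fls_nonpos (fps_map fps_to_fls P * E)" "fps_fls_nonpos E" "E $ 0 = 1"
  shows "P = fps_map fps_const (fps_map (\<lambda>f. f $ 0) P)"
proof -
  have "fps_fls_nonpos (fps_map fps_to_fls P)"
    using assms by (rule fps_fls_nonpos_cancel)
  then show ?thesis
    by (intro fps_ext) (simp add: fps_fls_nonpos_def fls_nonpos_fps_to_fls)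
qed

lemma halfline_iff: "(i, j) \<in> halfline \<longleftrightarrow> j = 0 \<and> i \<le> 0"
  by (auto simp: halfline_def)

definition walks :: "(int \<times> int) set \<Rightarrow> int \<Rightarrow> int \<Rightarrow> int \<Rightarrow> nat \<Rightarrow> (int \<times> int) list set" where
  "walks A k i j n = {ss. length ss = n \<and> set ss \<subseteq> A \<and> wpos k ss n = (i, j)
       \<and> (\<forall>m\<in>{1..n}. wpos k ss m \<notin> halfline)}"

lemma walk_count_eq_card_walks: "walk_count A k i j n = card (walks A k i j n)"
  by (simp add: walk_count_def walks_def)

lemma finite_walks: "finite A \<Longrightarrow> finite (walks A k i j n)"
  by (rule rev_finite_subset[OF finite_lists_length_eq[of A n]]) (auto simp: walks_def)

lemma wpos_snoc_le: "m \<le> length ss \<Longrightarrow> wpos k (ss @ [a]) m = wpos k ss m"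
  by (simp add: wpos_def)

lemma wpos_snoc_last:
  "wpos k (ss @ [a]) (Suc (length ss)) =
     (fst (wpos k ss (length ss)) + fst a, snd (wpos k ss (length ss)) + snd a)"
  by (simp add: wpos_def)

lemma walk_count_0: "walk_count A k i j 0 = (if (i, j) = (k, 0) then 1 else 0)"
proof -
  have "walks A k i j 0 = (if (i, j) = (k, 0) then {[]} else {})"
    by (auto simp: walks_def wpos_def)
  then show ?thesis by (simp add: walk_count_eq_card_walks)
qed

lemma walks_Suc:
  assumes "(i, j) \<notin> halfline"
  shows "walks A k i j (Suc n) = (\<Union>a\<in>A. (\<lambda>ss. ss @ [a]) ` walks A k (i - fst a) (j - snd a) n)"
proof (intro equalityI subsetI)
  fix ss assume ss: "ss \<in> walks A k i j (Suc n)"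
  then have "length ss = Suc n" by (simp add: walks_def)
  then obtain ys a where ys: "ss = ys @ [a]" and len: "length ys = n"
    by (metis length_Suc_conv_rev length_append_singleton nat.inject)
  have "wpos k ys n = (i - fst a, j - snd a)"
    using ss wpos_snoc_last[of k ys a] by (cases "wpos k ys n") (auto simp: ys len walks_def)
  moreover have "wpos k ys m \<notin> halfline" if "m \<in> {1..n}" for m
  proof -
    have "wpos k ss m \<notin> halfline" using ss that by (simp add: walks_def)
    then show ?thesis using that wpos_snoc_le[of m ys k a] by (simp add: ys len)
  qed
  ultimately have "ys \<in> walks A k (i - fst a) (j - snd a) n"
    using ss by (simp add: walks_def ys len)
  moreover have "a \<in> A" using ss by (simp add: walks_def ys)
  ultimately show "ss \<in> (\<Union>a\<in>A. (\<lambda>ss. ss @ [a]) ` walks A k (i - fst a) (j - snd a) n)"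
    using ys by blast
next
  fix ss assume "ss \<in> (\<Union>a\<in>A. (\<lambda>ss. ss @ [a]) ` walks A k (i - fst a) (j - snd a) n)"
  then obtain a ys where a: "a \<in> A" and ys: "ys \<in> walks A k (i - fst a) (j - snd a) n"
    and ss: "ss = ys @ [a]" by blast
  then have len: "length ys = n" by (simp add: walks_def)
  have last: "wpos k ss (Suc n) = (i, j)"
    using ys wpos_snoc_last[of k ys a] by (simp add: ss len walks_def)
  have "wpos k ss m \<notin> halfline" if "m \<in> {1..Suc n}" for m
  proof (cases "m = Suc n")
    case True
    then show ?thesis using last assms by simp
  next
    case False
    then show ?thesis
      using that ys wpos_snoc_le[of m ys k a] by (auto simp: ss len walks_def)
  qed
  then show "ss \<in> walks A k i j (Suc n)"
    using a ys last by (simp add: walks_def ss len)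
qed

lemma walk_count_Suc:
  assumes "finite A"
  shows "walk_count A k i j (Suc n) = (if (i, j) \<in> halfline then 0
           else (\<Sum>a\<in>A. walk_count A k (i - fst a) (j - snd a) n))"
proof (cases "(i, j) \<in> halfline")
  case True
  then have "walks A k i j (Suc n) = {}"
    by (auto simp: walks_def intro!: bexI[of _ "Suc n"])
  then show ?thesis using True by (simp add: walk_count_eq_card_walks)
next
  case False
  have "card (walks A k i j (Suc n)) =
     (\<Sum>a\<in>A. card ((\<lambda>ss. ss @ [a]) ` walks A k (i - fst a) (j - snd a) n))"
    unfolding walks_Suc[OF False]
    by (rule card_UN_disjoint) (auto simp: assms finite_walks)
  also have "\<dots> = (\<Sum>a\<in>A. card (walks A k (i - fst a) (j - snd a) n))"
    by (intro sum.cong refl card_image) (auto simp: inj_on_def)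
  finally show ?thesis using False by (simp add: walk_count_eq_card_walks)
qed

lemma walk_count_halfline:
  assumes "finite A" "(i, j) \<in> halfline"
  shows "walk_count A k i j n = (if n = 0 \<and> i = k \<and> j = 0 then 1 else 0)"
  using assms by (cases n) (auto simp: walk_count_0 walk_count_Suc halfline_iff)

lemma walk_count_abscissa_bound:
  assumes "finite A" "walk_count A k i j n \<noteq> 0"
  shows "k - int n * (\<Sum>a\<in>A. \<bar>fst a\<bar>) \<le> i"
  using assms(2)
proof (induction n arbitrary: i j)
  case 0
  then show ?case by (simp add: walk_count_0 split: if_splits)
next
  case (Suc n)
  then obtain a where a: "a \<in> A" "walk_count A k (i - fst a) (j - snd a) n \<noteq> 0"
    by (metis (no_types, lifting) sum.neutral walk_count_Suc[OF assms(1)])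
  have "\<bar>fst a\<bar> \<le> (\<Sum>a\<in>A. \<bar>fst a\<bar>)"
    using assms(1) a(1) by (intro member_le_sum) auto
  with Suc.IH[OF a(2)] show ?case by (simp add: algebra_simps)
qed

lemma Splus_nth [simp]: "Splus A i j $ n $ k = real (walk_count A 0 (i + int k) j n)"
  by (simp add: Splus_def S_gf_def)

lemma D_gf_nth [simp]: "D_gf A i j $ n $ k = real (walk_count A (- int k) i j n)"
  by (simp add: D_gf_def)

lemma Splus_halfline:
  assumes "finite A" "i \<le> 0"
  shows "Splus A i 0 = fps_const (fps_X ^ nat (- i)) * Splus A 0 0"
  by (intro fps_ext)
     (use assms in \<open>auto simp: fps_const_mult_left fps_X_power_mult_nth walk_count_halfline
                                 halfline_iff add.commute\<close>)

lemma Splus_off_halfline: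
  assumes "finite A" "(i, j) \<notin> halfline"
  shows "Splus A i j = fps_X * (\<Sum>a\<in>A. Splus A (i - fst a) (j - snd a))"
proof (intro fps_ext)
  fix n k
  have "(i + int k, j) \<notin> halfline" using assms(2) by (auto simp: halfline_iff)
  then show "Splus A i j $ n $ k = (fps_X * (\<Sum>a\<in>A. Splus A (i - fst a) (j - snd a))) $ n $ k"
    using assms(1)
    by (cases n) (auto simp: walk_count_0 walk_count_Suc fps_sum_nth algebra_simps halfline_iff)
qed

lemma D_gf_halfline:
  assumes "finite A" "i \<le> 0"
  shows "D_gf A i 0 = fps_const (fps_X ^ nat (- i))"
  by (intro fps_ext) (use assms in \<open>auto simp: walk_count_halfline halfline_iff fps_X_power_nth\<close>)

lemma D_gf_off_halfline:
  assumes "finite A" "(i, j) \<notin> halfline"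
  shows "D_gf A i j = fps_X * (\<Sum>a\<in>A. D_gf A (i - fst a) (j - snd a))"
  by (intro fps_ext)
     (use assms in \<open>auto simp: walk_count_0 walk_count_Suc fps_sum_nth halfline_iff gr0_conv_Suc\<close>)

lemma fps_halfline_recursion_unique:
  fixes X Y :: "int \<Rightarrow> int \<Rightarrow> 'a::comm_semiring_1 fps"
  assumes boundary: "\<And>i j. (i, j) \<in> halfline \<Longrightarrow> X i j = Y i j"
    and X: "\<And>i j. (i, j) \<notin> halfline \<Longrightarrow> X i j = fps_X * (\<Sum>a\<in>A. X (i - fst a) (j - snd a))"
    and Y: "\<And>i j. (i, j) \<notin> halfline \<Longrightarrow> Y i j = fps_X * (\<Sum>a\<in>A. Y (i - fst a) (j - snd a))"
  shows "X = Y"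
proof -
  let ?C = "\<lambda>(i, j). if (i, j) \<in> halfline then X i j else 0"
  let ?L = "\<lambda>F (i, j). if (i, j) \<in> halfline then 0 else (\<Sum>a\<in>A. F (i - fst a, j - snd a))"
  have "case_prod X = case_prod Y"
  proof (rule fps_causal_fixpoint_unique[where C = ?C and L = ?L])
    show "?L F p $ n = ?L G p $ n" if "\<And>q. F q $ n = G q $ n"
      for F G :: "int \<times> int \<Rightarrow> 'a fps" and n p
      using that by (auto simp: fps_sum_nth split: prod.split)
    show "case_prod X p = ?C p + fps_X * ?L (case_prod X) p" for p
      using X by (cases p) simp
    show "case_prod Y p = ?C p + fps_X * ?L (case_prod Y) p" for p
      using Y boundary by (cases p) simp
  qed
  then show ?thesis
    by (metis curry_case_prod)
qed

lemma D_gf_eq_mult_Splus: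
  assumes "finite A" "G * Splus A 0 0 = 1"
  shows "D_gf A i j = G * Splus A i j"
proof -
  have "D_gf A = (\<lambda>i j. G * Splus A i j)"
  proof (rule fps_halfline_recursion_unique)
    show "D_gf A i j = G * Splus A i j" if "(i, j) \<in> halfline" for i j
    proof -
      from that have "j = 0" "i \<le> 0" by (auto simp: halfline_iff)
      then show ?thesis
        using assms
        by (simp add: D_gf_halfline Splus_halfline[OF assms(1) \<open>i \<le> 0\<close>] mult.left_commute[of G])
    qed
    show "D_gf A i j = fps_X * (\<Sum>a\<in>A. D_gf A (i - fst a) (j - snd a))"
      if "(i, j) \<notin> halfline" for i j
      by (rule D_gf_off_halfline[OF assms(1) that])
    show "G * Splus A i j = fps_X * (\<Sum>a\<in>A. G * Splus A (i - fst a) (j - snd a))"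
      if "(i, j) \<notin> halfline" for i j
      unfolding Splus_off_halfline[OF assms(1) that] by (simp add: sum_distrib_left mult.left_commute)
  qed
  then show ?thesis by simp
qed

locale small_height_steps =
  fixes A :: "(int \<times> int) set"
  assumes finite_steps: "finite A"
    and steps_vsym: "\<And>a b. (a, b) \<in> A \<Longrightarrow> (a, - b) \<in> A"
    and steps_height: "\<And>a b. (a, b) \<in> A \<Longrightarrow> \<bar>b\<bar> \<le> 1"
    and steps_up: "\<exists>a. (a, 1) \<in> A"
begin

definition level_gf :: "int \<Rightarrow> real fls fps" where
  "level_gf j = Abs_fps (\<lambda>n. Abs_fls (\<lambda>i. real (walk_count A 0 i j n)))"

lemma level_gf_nth [simp]: "level_gf j $ n $$ i = real (walk_count A 0 i j n)"
proof -
  have "Abs_fls (\<lambda>i. real (walk_count A 0 i j n)) $$ i = real (walk_count A 0 i j n)"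
    by (rule nth_Abs_fls_lower_bound[where N = "- int n * (\<Sum>a\<in>A. \<bar>fst a\<bar>)"])
       (use walk_count_abscissa_bound[OF finite_steps, of 0 _ j n] in fastforce)
  then show ?thesis by (simp add: level_gf_def)
qed

definition step_op :: "(int \<Rightarrow> real fls fps) \<Rightarrow> int \<Rightarrow> real fls fps" where
  "step_op F j = (\<Sum>a\<in>A. fps_const (fls_X_intpow (fst a)) * F (j - snd a))"

lemma step_op_nth: "step_op F j $ n = (\<Sum>a\<in>A. fls_X_intpow (fst a) * (F (j - snd a) $ n))"
  by (simp add: step_op_def fps_sum_nth fps_const_mult_left)

lemma step_op_nth_nth: "step_op F j $ n $$ i = (\<Sum>a\<in>A. F (j - snd a) $ n $$ (i - fst a))"
  by (simp add: step_op_nth fls_nth_sum fls_X_intpow_times_conv_shift)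

lemma step_op_mult_right: "step_op (\<lambda>j. F j * c) j = step_op F j * c"
  by (simp add: step_op_def sum_distrib_right mult.assoc)

lemma step_op_split:
  "step_op F j = fps_const (A0 A) * F j + fps_const (A1 A) * (F (j - 1) + F (j + 1))"
proof -
  have heights: "snd ` A \<subseteq> {-1, 0, 1}"
    using steps_height by force
  have down_eq_up: "{i. (i, -1) \<in> A} = {i. (i, 1) \<in> A}"
    using steps_vsym by fastforce
  have "step_op F j = (\<Sum>b\<in>{-1, 0, 1}. \<Sum>a\<in>{a\<in>A. snd a = b}.
                fps_const (fls_X_intpow (fst a)) * F (j - snd a))"
    unfolding step_op_def by (rule sum.group[OF finite_steps _ heights, symmetric]) simp
  also have "\<dots> = (\<Sum>b\<in>{-1, 0, 1::int}.
                fps_const (\<Sum>i\<in>{i. (i, b) \<in> A}. fls_X_intpow i) * F (j - b))"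
    by (simp add: sum_fiber_snd fps_const_sum sum_distrib_right)
  also have "\<dots> = fps_const (A0 A) * F j + fps_const (A1 A) * (F (j - 1) + F (j + 1))"
    using down_eq_up by (simp add: A0_def A1_def algebra_simps)
  finally show ?thesis .
qed

lemma A1_nonzero: "A1 A \<noteq> 0"
proof -
  obtain a where a: "(a, 1) \<in> A" using steps_up by blast
  have "finite {i. (i, 1) \<in> A}"
    using finite_imageI[OF finite_steps, of fst] by (rule rev_finite_subset) force
  then have "A1 A $$ a = 1"
    using a by (simp add: A1_def fls_nth_sum)
  then show ?thesis by auto
qed

(* Counts the walks from the origin whose last step is the first one to land on H. *)
definition exit_gf :: "real fls fps" where
  "exit_gf = 1 - level_gf 0 + fps_X * step_op level_gf 0"

lemma fps_fls_nonpos_exit_gf: "fps_fls_nonpos exit_gf"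
  unfolding fps_fls_nonpos_def fls_nonpos_def
proof (intro allI impI)
  fix n and i :: int assume "0 < i"
  show "exit_gf $ n $$ i = 0"
  proof (cases n)
    case 0
    then show ?thesis using \<open>0 < i\<close> by (simp add: exit_gf_def walk_count_0)
  next
    case (Suc m)
    then show ?thesis using \<open>0 < i\<close>
      by (simp add: exit_gf_def step_op_nth_nth walk_count_Suc[OF finite_steps] halfline_iff)
  qed
qed

lemma level_gf_system:
  "level_gf j = (if j = 0 then 1 - exit_gf else 0) + fps_X * step_op level_gf j"
proof (cases "j = 0")
  case False
  show ?thesis
  proof (intro fps_ext fls_eqI)
    fix n i
    show "level_gf j $ n $$ i =
            ((if j = 0 then 1 - exit_gf else 0) + fps_X * step_op level_gf j) $ n $$ i"
    proof (cases n)
      case 0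
      then show ?thesis using False by (simp add: walk_count_0)
    next
      case (Suc m)
      then show ?thesis using False
        by (simp add: step_op_nth_nth walk_count_Suc[OF finite_steps] halfline_iff)
    qed
  qed
qed (simp add: exit_gf_def)

(* rho is the root vanishing at t = 0 of the kernel 1 - t (A0 + A1 (y + 1/y)). *)
lemma kernel_root:
  obtains rho s :: "real fls fps"
  where "s ^ 2 = delta A"
    and "fps_X * fps_const (A1 A) * rho^2 + fps_X * fps_const (A1 A)
           = (1 - fps_X * fps_const (A0 A)) * rho"
    and "s = 1 - fps_X * fps_const (A0 A) - 2 * (fps_X * fps_const (A1 A)) * rho"
    and "s $ 0 = 1"
proof -
  define K q where "K = 1 - fps_X * fps_const (A0 A)" and "q = fps_X * fps_const (A1 A)"
  define s where "s = fps_radical (\<lambda>_ _. 1) 2 (delta A)"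
  have s0: "s $ 0 = 1" by (simp add: s_def)
  have "delta A $ 0 = 1"
    by (simp add: delta_def power2_eq_square)
  then have "fps_radical (\<lambda>_ _. 1) (Suc 1) (delta A) ^ Suc 1 = delta A"
    using power_radical[of "delta A" "\<lambda>_ _. 1" 1] by simp
  then have s_delta: "s ^ 2 = delta A"
    by (simp add: s_def numeral_2_eq_2)
  have delta_kernel: "delta A = K^2 - 4 * q^2"
    by (simp add: delta_def K_def q_def power_mult_distrib fps_const_power)
  define rho where "rho = fps_shift 1 (K - s) * fps_const (inverse (2 * A1 A))"
  have "fps_X * fps_shift 1 (K - s) = K - s"
    by (rule fps_ext) (simp add: K_def s0)
  moreover have "2 * q * rho
      = fps_X * fps_shift 1 (K - s) * (fps_const (2 * A1 A) * fps_const (inverse (2 * A1 A)))"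
    by (simp add: rho_def q_def fps_numeral_fps_const algebra_simps)
  ultimately have rho: "2 * q * rho = K - s"
    using A1_nonzero by (simp flip: fps_const_mult)
  have "(4 * q) * (q * rho^2 + q - K * rho) = (2 * q * rho)^2 - 2 * K * (2 * q * rho) + 4 * q^2"
    by (simp add: algebra_simps power2_eq_square)
  also have "\<dots> = 0"
    unfolding rho using s_delta delta_kernel by (simp add: algebra_simps power2_eq_square)
  finally have "q * rho^2 + q = K * rho"
    using A1_nonzero by (simp add: q_def)
  moreover have "s = K - 2 * q * rho"
    using rho by simp
  ultimately show ?thesis
    using that[of s rho] s_delta s0 unfolding K_def q_def by blast
qed

lemma level_gf_0_sq_delta: "level_gf 0 ^ 2 * delta A = (1 - exit_gf) ^ 2"
proof -
  define K q where "K = 1 - fps_X * fps_const (A0 A)" and "q = fps_X * fps_const (A1 A)"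
  obtain rho s where s: "s ^ 2 = delta A" "s $ 0 = 1"
    and root: "q * rho^2 + q = K * rho" and s_root: "s = K - 2 * q * rho"
    using kernel_root unfolding K_def q_def by blast
  define U where "U j = inverse s * rho ^ nat \<bar>j\<bar>" for j
  have U: "U j = (if j = 0 then 1 else 0) + fps_X * step_op U j" for j
  proof -
    have "inverse s * (K - 2 * q * rho) = 1"
      using s(2) s_root by (simp add: inverse_mult_eq_1)
    from geometric_kernel_solution[OF root this, of j]
    have "K * U j = (if j = 0 then 1 else 0) + q * (U (j - 1) + U (j + 1))"
      by (simp add: U_def)
    then show ?thesis
      by (simp add: step_op_split K_def q_def algebra_simps)
  qed
  have "level_gf = (\<lambda>j. U j * (1 - exit_gf))"
  proof (rule fps_causal_fixpoint_unique[where L = step_op])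
    show "step_op F j $ n = step_op G j $ n" if "\<And>j. F j $ n = G j $ n" for F G n j
      using that by (simp add: step_op_nth)
    show "level_gf j = (if j = 0 then 1 - exit_gf else 0) + fps_X * step_op level_gf j" for j
      by (rule level_gf_system)
    show "U j * (1 - exit_gf) =
            (if j = 0 then 1 - exit_gf else 0) + fps_X * step_op (\<lambda>j. U j * (1 - exit_gf)) j" for j
    proof -
      have "U j * (1 - exit_gf) = ((if j = 0 then 1 else 0) + fps_X * step_op U j) * (1 - exit_gf)"
        using U[of j] by simp
      also have "\<dots> = (if j = 0 then 1 - exit_gf else 0) + fps_X * (step_op U j * (1 - exit_gf))"
        by (simp add: distrib_right mult.assoc)
      finally show ?thesis by (simp only: step_op_mult_right)
    qed
  qed
  then have "level_gf 0 * s = (inverse s * s) * (1 - exit_gf)"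
    by (simp add: U_def ac_simps)
  then have "level_gf 0 * s = 1 - exit_gf"
    using s(2) by (simp add: inverse_mult_eq_1)
  then show ?thesis
    using s(1) by (metis power_mult_distrib)
qed

lemma level_gf_0_eq_Splus: "level_gf 0 = fps_map fps_to_fls (Splus A 0 0)"
  by (intro fps_ext fls_eqI) (simp add: walk_count_halfline[OF finite_steps] halfline_iff)

lemma Splus_origin_sq_Delta:
  assumes "canonical_factorization A Dc Dl Db"
  shows "Splus A 0 0 ^ 2 * fps_map fps_of_poly Dl = 1"
proof -
  define P where "P = Splus A 0 0 ^ 2 * fps_map fps_of_poly Dl"
  define E where "E = fps_map fls_const Dc * fps_map inv_poly_fls Db"
  have "fps_map fps_to_fls P * E = level_gf 0 ^ 2 * delta A"
    using assms unfolding canonical_factorization_def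
    by (simp add: P_def E_def level_gf_0_eq_Splus fps_map_mult fps_map_power fps_map_compose
                  fps_to_fls_plus fls_times_fps_to_fls o_def ac_simps)
  also have "\<dots> = (1 - exit_gf) ^ 2"
    by (rule level_gf_0_sq_delta)
  finally have "fps_fls_nonpos (fps_map fps_to_fls P * E)"
    by (simp add: fps_fls_nonpos_power fps_fls_nonpos_diff fps_fls_nonpos_one fps_fls_nonpos_exit_gf)
  moreover have "fps_fls_nonpos E"
    unfolding E_def
    by (intro fps_fls_nonpos_mult)
       (simp_all add: fps_fls_nonpos_def fls_nonpos_def inv_poly_fls_def fls_nth_sum)
  moreover have "E $ 0 = 1"
    using assms by (simp add: E_def canonical_factorization_def inv_poly_fls_def)
  ultimately have P_const: "P = fps_map fps_const (fps_map (\<lambda>f. f $ 0) P)"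
    by (rule fps_to_fls_series_const)
  have "fps_map (\<lambda>f. f $ 0) (Splus A 0 0) = 1"
    by (rule fps_ext) (simp add: walk_count_halfline[OF finite_steps] halfline_iff)
  moreover have "fps_map (\<lambda>f. f $ 0) (fps_map fps_of_poly Dl) = 1"
    using assms by (intro fps_ext) (simp add: canonical_factorization_def poly_0_coeff_0)
  ultimately have "fps_map (\<lambda>f. f $ 0) P = 1"
    by (simp add: P_def fps_map_mult fps_map_power)
  then show ?thesis
    using P_const by (simp add: P_def fps_map_one)
qed

end

theorem mainTheorem13:
  fixes A :: "(int \<times> int) set" and Dc :: "real fps" and Dl Db :: "real poly fps"
    and i j :: int
  assumes "finite A"
    and "\<And>a b. (a, b) \<in> A \<Longrightarrow> (a, - b) \<in> A"
    and "\<And>a b. (a, b) \<in> A \<Longrightarrow> \<bar>b\<bar> \<le> 1"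
    and "\<exists>a. (a, 1) \<in> A"
    and "\<And>a b. (a, b) \<in> A \<Longrightarrow> (- a, - b) \<in> A"
    and "canonical_factorization A Dc Dl Db"
    and "(i, j) \<notin> halfline"
  shows "D_gf A i j = fps_sqrt1 (fps_map fps_of_poly Dl) * Splus A i j"
proof -
  interpret small_height_steps A
    using assms(1-4) by unfold_locales auto
  define S V where "S = Splus A 0 0" and "V = fps_map fps_of_poly Dl"
  have SV: "S ^ 2 * V = 1"
    unfolding S_def V_def using assms(6) by (rule Splus_origin_sq_Delta)
  have "V $ 0 = 1" "S $ 0 = 1"
    using assms(6) by (auto simp: V_def S_def canonical_factorization_def walk_count_0 intro!: fps_ext)
  then have "fps_sqrt1 V = V * S"
    using SV by (intro fps_sqrt1_eqI) (simp_all add: power2_eq_square algebra_simps)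
  moreover have "V * S * S = 1"
    using SV by (simp add: power2_eq_square algebra_simps)
  ultimately show ?thesis
    unfolding S_def V_def using D_gf_eq_mult_Splus[OF assms(1)] by simp
qed

end
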